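(* Let $\mathcal{T}$ be the tree constructed below in a metric space of doubling dimension at most $\kappa$. Every node $\langle j,r\rangle$ of $\mathcal{T}$ has at most $2^{4\kappa}$ children.
   Context: $(V,d)$ is a metric space of diameter $W$ whose doubling dimension is at most $\kappa$: every ball $B(x,\rho)=\{y\in V:d(x,y)\le\rho\}$ can be covered by $2^\kappa$ balls of radius $\rho/2$. $F\subseteq V$ is a finite set of facilities with opening costs $f_j>0$, $f_{\min}=\min_j f_j$. Let $\rho_{\min}=\lfloor\log_5 f_{\min}\rfloor$, $\rho_{\max}=\lceil\log_5 W\rceil$. For each integer $r\in[\rho_{\min},\rho_{\max}]$, let $J'_r=\{j\in F:f_j\le 5^r\}$ and let $J_r$ be a maximal subset of $J'_r$ such that any two facilities of $J_r$ are at distance greater than $5^{r+1}$. $\Pi=\{\langle j,r\rangle:\rho_{\min}\le r\le\rho_{\max},\ j\in J_r\}$. The tree $\mathcal{T}$ on $\Pi$ has as root the unique pair with $r=\rho_{\max}$, and for $r<\rho_{\max}$ and $j\in J_r$, $\mathrm{parent}(j,r)=\langle j',r+1\rangle$ where $j'$ is a facility of $J_{r+1}$ closest to $j$ (ties broken arbitrarily). *)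

theory Defs
  imports "HOL-Analysis.Analysis"
begin

definition dball :: "'a set \<Rightarrow> ('a \<Rightarrow> 'a \<Rightarrow> real) \<Rightarrow> 'a \<Rightarrow> real \<Rightarrow> 'a set" where
  "dball V d x \<rho> = {y \<in> V. d x y \<le> \<rho>}"

definition doubling_dim_le :: "'a set \<Rightarrow> ('a \<Rightarrow> 'a \<Rightarrow> real) \<Rightarrow> real \<Rightarrow> bool" where
  "doubling_dim_le V d \<kappa> \<longleftrightarrow>
     (\<forall>x\<in>V. \<forall>\<rho>>0. \<exists>C. C \<subseteq> V \<and> finite C \<and> real (card C) \<le> 2 powr \<kappa> \<and>
        dball V d x \<rho> \<subseteq> (\<Union>c\<in>C. dball V d c (\<rho> / 2)))"

definition diam :: "'a set \<Rightarrow> ('a \<Rightarrow> 'a \<Rightarrow> real) \<Rightarrow> real" where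
  "diam V d = Sup {d x y | x y. x \<in> V \<and> y \<in> V}"

definition f_min :: "'a set \<Rightarrow> ('a \<Rightarrow> real) \<Rightarrow> real" where
  "f_min F f = Min (f ` F)"

definition rho_min :: "'a set \<Rightarrow> ('a \<Rightarrow> real) \<Rightarrow> int" where
  "rho_min F f = \<lfloor>log 5 (f_min F f)\<rfloor>"

definition rho_max :: "'a set \<Rightarrow> ('a \<Rightarrow> 'a \<Rightarrow> real) \<Rightarrow> int" where
  "rho_max V d = \<lceil>log 5 (diam V d)\<rceil>"

definition Jprime :: "'a set \<Rightarrow> ('a \<Rightarrow> real) \<Rightarrow> int \<Rightarrow> 'a set" where
  "Jprime F f r = {j \<in> F. f j \<le> 5 powr (real_of_int r)}"

definition maximal_sep :: "('a \<Rightarrow> 'a \<Rightarrow> real) \<Rightarrow> 'a set \<Rightarrow> real \<Rightarrow> 'a set \<Rightarrow> bool" where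
  "maximal_sep d A \<delta> S \<longleftrightarrow>
     S \<subseteq> A \<and> (\<forall>x\<in>S. \<forall>y\<in>S. x \<noteq> y \<longrightarrow> d x y > \<delta>) \<and>
     (\<forall>S'. S \<subseteq> S' \<and> S' \<subseteq> A \<and> (\<forall>x\<in>S'. \<forall>y\<in>S'. x \<noteq> y \<longrightarrow> d x y > \<delta>) \<longrightarrow> S' = S)"

definition Nodes :: "('a \<Rightarrow> 'a \<Rightarrow> real) \<Rightarrow> 'a set \<Rightarrow> ('a \<Rightarrow> real) \<Rightarrow> 'a set \<Rightarrow> (int \<Rightarrow> 'a set) \<Rightarrow> ('a \<times> int) set" where
  "Nodes d V f F J = {(j, r). rho_min F f \<le> r \<and> r \<le> rho_max V d \<and> j \<in> J r}"

definition valid_parent ::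
  "('a \<Rightarrow> 'a \<Rightarrow> real) \<Rightarrow> 'a set \<Rightarrow> ('a \<Rightarrow> real) \<Rightarrow> 'a set \<Rightarrow> (int \<Rightarrow> 'a set) \<Rightarrow> ('a \<times> int \<Rightarrow> 'a \<times> int) \<Rightarrow> bool" where
  "valid_parent d V f F J par \<longleftrightarrow>
     (\<forall>(j, r) \<in> Nodes d V f F J. r < rho_max V d \<longrightarrow>
        snd (par (j, r)) = r + 1 \<and> fst (par (j, r)) \<in> J (r + 1) \<and>
        (\<forall>j'' \<in> J (r + 1). d j (fst (par (j, r))) \<le> d j j''))"

definition children ::
  "('a \<Rightarrow> 'a \<Rightarrow> real) \<Rightarrow> 'a set \<Rightarrow> ('a \<Rightarrow> real) \<Rightarrow> 'a set \<Rightarrow> (int \<Rightarrow> 'a set) \<Rightarrow> ('a \<times> int \<Rightarrow> 'a \<times> int) \<Rightarrow> 'a \<times> int \<Rightarrow> ('a \<times> int) set" where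
  "children d V f F J par u = {v \<in> Nodes d V f F J. snd v < rho_max V d \<and> par v = u}"

end

theory Submission
  imports Defs
begin

text \<open>A child \<open>\<langle>j', r - 1\<rangle>\<close> of \<open>\<langle>j, r\<rangle>\<close> lies within \<open>5\<^sup>r\<^sup>+\<^sup>1\<close> of \<open>j\<close>: since \<open>f j' \<le> 5\<^sup>r\<close>, maximality
  of \<open>J\<^sub>r\<close> puts some facility of \<open>J\<^sub>r\<close> that close to \<open>j'\<close>, and \<open>j\<close> is the nearest one. The children
  are pairwise more than \<open>5\<^sup>r\<close> apart, while four applications of the doubling property cover the
  ball of radius \<open>5\<^sup>r\<^sup>+\<^sup>1\<close> by \<open>2\<^sup>4\<^sup>\<kappa>\<close> balls of radius \<open>5\<^sup>r\<^sup>+\<^sup>1/16\<close>, each containing at most one child.\<close>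

lemma doubling_cover_iterate:
  assumes doubling: "doubling_dim_le V d \<kappa>" and x: "x \<in> V" and \<rho>: "\<rho> > 0"
  shows "\<exists>C. C \<subseteq> V \<and> finite C \<and> real (card C) \<le> (2 powr \<kappa>) ^ n \<and>
           dball V d x \<rho> \<subseteq> (\<Union>c\<in>C. dball V d c (\<rho> / 2 ^ n))"
proof (induction n)
  case 0
  show ?case
    by (rule exI[of _ "{x}"]) (use x in auto)
next
  case (Suc n)
  then obtain C where C: "C \<subseteq> V" "finite C" "real (card C) \<le> (2 powr \<kappa>) ^ n"
    "dball V d x \<rho> \<subseteq> (\<Union>c\<in>C. dball V d c (\<rho> / 2 ^ n))" by blast
  have "\<exists>D. D \<subseteq> V \<and> finite D \<and> real (card D) \<le> 2 powr \<kappa> \<and>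
          dball V d c (\<rho> / 2 ^ n) \<subseteq> (\<Union>e\<in>D. dball V d e (\<rho> / 2 ^ Suc n))" if "c \<in> C" for c
    using doubling[unfolded doubling_dim_le_def, rule_format, of c "\<rho> / 2 ^ n"] that C(1) \<rho>
    by (auto simp: mult.commute)
  then obtain G where G: "\<And>c. c \<in> C \<Longrightarrow> G c \<subseteq> V \<and> finite (G c) \<and> real (card (G c)) \<le> 2 powr \<kappa> \<and>
          dball V d c (\<rho> / 2 ^ n) \<subseteq> (\<Union>e\<in>G c. dball V d e (\<rho> / 2 ^ Suc n))"
    by metis
  have "real (card (\<Union>c\<in>C. G c)) \<le> (\<Sum>c\<in>C. real (card (G c)))"
    by (metis card_UN_le[OF C(2)] of_nat_le_iff of_nat_sum)
  also have "\<dots> \<le> real (card C) * 2 powr \<kappa>"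
    using sum_mono[of C "\<lambda>c. real (card (G c))" "\<lambda>_. 2 powr \<kappa>"] G by simp
  also have "\<dots> \<le> (2 powr \<kappa>) ^ Suc n"
    using mult_right_mono[OF C(3), of "2 powr \<kappa>"] by (simp add: mult.commute)
  finally have card: "real (card (\<Union>c\<in>C. G c)) \<le> (2 powr \<kappa>) ^ Suc n" .
  have "dball V d x \<rho> \<subseteq> (\<Union>c\<in>C. \<Union>e\<in>G c. dball V d e (\<rho> / 2 ^ Suc n))"
    using C(4) G by (fastforce simp del: power_Suc)
  then have cover: "dball V d x \<rho> \<subseteq> (\<Union>e\<in>(\<Union>c\<in>C. G c). dball V d e (\<rho> / 2 ^ Suc n))"
    by (simp only: UN_UN_flatten)
  have "(\<Union>c\<in>C. G c) \<subseteq> V" "finite (\<Union>c\<in>C. G c)"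
    using C(2) G by auto
  with card cover show ?case
    by blast
qed

lemma (in Metric_space) card_le_card_cover_if_separated:
  assumes C: "C \<subseteq> M" "finite C" and cover: "S \<subseteq> (\<Union>c\<in>C. dball M d c \<delta>)"
    and separated: "\<And>x y. x \<in> S \<Longrightarrow> y \<in> S \<Longrightarrow> x \<noteq> y \<Longrightarrow> d x y > 2 * \<delta>"
  shows "card S \<le> card C"
proof -
  have "\<forall>x\<in>S. \<exists>c. c \<in> C \<and> x \<in> dball M d c \<delta>"
    using cover by blast
  then obtain g where g: "\<And>x. x \<in> S \<Longrightarrow> g x \<in> C \<and> x \<in> dball M d (g x) \<delta>"
    by (metis (no_types, lifting) bchoice)
  have "inj_on g S"
  proof (rule inj_onI, rule ccontr)
    fix x y assume xy: "x \<in> S" "y \<in> S" "g x = g y" "x \<noteq> y"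
    have "d x y \<le> d x (g x) + d (g x) y"
      using g[OF xy(1)] g[OF xy(2)] C(1) by (intro triangle) (auto simp: dball_def)
    also have "\<dots> \<le> 2 * \<delta>"
      using g[OF xy(1)] g[OF xy(2)] xy(3) commute[of x "g x"] by (simp add: dball_def)
    finally show False
      using separated[OF xy(1,2,4)] by simp
  qed
  then show ?thesis
    using g C(2) by (intro card_inj_on_le) auto
qed

lemma maximal_sep_subset: "maximal_sep d A \<delta> S \<Longrightarrow> S \<subseteq> A"
  unfolding maximal_sep_def by simp

lemma maximal_sep_dist:
  "maximal_sep d A \<delta> S \<Longrightarrow> x \<in> S \<Longrightarrow> y \<in> S \<Longrightarrow> x \<noteq> y \<Longrightarrow> d x y > \<delta>"
  unfolding maximal_sep_def by blast

lemma (in Metric_space) maximal_sep_dominating: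
  assumes max: "maximal_sep d A \<delta> S" and "A \<subseteq> M" "0 \<le> \<delta>" and x: "x \<in> A"
  shows "\<exists>y\<in>S. d x y \<le> \<delta>"
proof (rule ccontr)
  assume "\<not> (\<exists>y\<in>S. d x y \<le> \<delta>)"
  then have far: "\<forall>y\<in>S. d x y > \<delta>" by auto
  have "\<forall>y\<in>insert x S. \<forall>z\<in>insert x S. y \<noteq> z \<longrightarrow> d y z > \<delta>"
    using far maximal_sep_dist[OF max] commute by auto
  then have "insert x S = S"
    using max x unfolding maximal_sep_def by (metis insert_subsetI subset_insertI)
  then have "d x x > \<delta>"
    using far by blast
  then show False
    using x \<open>A \<subseteq> M\<close> \<open>0 \<le> \<delta>\<close> by auto
qed

lemma Jprime_mono: "r \<le> s \<Longrightarrow> Jprime F f r \<subseteq> Jprime F f s"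
  unfolding Jprime_def by (auto intro: order_trans)

locale facility_tree = Metric_space V d
  for V :: "'a set" and d :: "'a \<Rightarrow> 'a \<Rightarrow> real" +
  fixes F :: "'a set" and f :: "'a \<Rightarrow> real"
    and J :: "int \<Rightarrow> 'a set" and par :: "'a \<times> int \<Rightarrow> 'a \<times> int"
  assumes F_fin: "finite F" and F_sub: "F \<subseteq> V"
    and J_max: "\<forall>r. rho_min F f \<le> r \<and> r \<le> rho_max V d \<longrightarrow>
                     maximal_sep d (Jprime F f r) (5 powr (real_of_int (r + 1))) (J r)"
    and par_ok: "valid_parent d V f F J par"
begin

lemma J_subset_Jprime:
  "rho_min F f \<le> r \<Longrightarrow> r \<le> rho_max V d \<Longrightarrow> J r \<subseteq> Jprime F f r"
  using J_max maximal_sep_subset by blast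

lemma Jprime_subset_space: "Jprime F f r \<subseteq> V"
  using F_sub unfolding Jprime_def by auto

lemma finite_J: "rho_min F f \<le> r \<Longrightarrow> r \<le> rho_max V d \<Longrightarrow> finite (J r)"
  by (rule finite_subset[OF _ F_fin]) (use J_subset_Jprime in \<open>auto simp: Jprime_def\<close>)

lemma Nodes_fst_in_space: "(j, r) \<in> Nodes d V f F J \<Longrightarrow> j \<in> V"
  using J_subset_Jprime Jprime_subset_space unfolding Nodes_def by blast

lemma children_subset:
  assumes "(j, r) \<in> Nodes d V f F J"
  shows "children d V f F J par (j, r) \<subseteq>
           (\<lambda>j'. (j', r - 1)) ` (J (r - 1) \<inter> dball V d j (5 powr (real_of_int (r + 1))))"
proof
  fix v assume "v \<in> children d V f F J par (j, r)"
  then obtain j' s where v: "v = (j', s)" and node: "(j', s) \<in> Nodes d V f F J"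
    and s: "s < rho_max V d" and parent: "par (j', s) = (j, r)"
    unfolding children_def by (cases v) auto
  have s_range: "rho_min F f \<le> s" "s \<le> rho_max V d" and j': "j' \<in> J s"
    using node unfolding Nodes_def by auto
  have r: "r = s + 1" and nearest: "\<forall>j''\<in>J r. d j' j \<le> d j' j''"
    using par_ok node s parent unfolding valid_parent_def by auto
  have r_range: "rho_min F f \<le> r" "r \<le> rho_max V d"
    using s_range s r by auto
  have "j' \<in> Jprime F f r"
    using J_subset_Jprime[OF s_range] Jprime_mono[of s r F f] j' r by auto
  then obtain y where y: "y \<in> J r" "d j' y \<le> 5 powr (real_of_int (r + 1))"
    using maximal_sep_dominating[OF J_max[rule_format, OF conjI[OF r_range]] Jprime_subset_space]
    by auto
  have "d j j' \<le> 5 powr (real_of_int (r + 1))"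
    using nearest y commute[of j j'] by force
  moreover have "j' \<in> V"
    using J_subset_Jprime[OF s_range] Jprime_subset_space j' by blast
  ultimately have "j' \<in> J (r - 1) \<inter> dball V d j (5 powr (real_of_int (r + 1)))"
    using r j' by (simp add: dball_def)
  moreover have "v = (j', r - 1)"
    using v r by simp
  ultimately show "v \<in> (\<lambda>j'. (j', r - 1)) ` (J (r - 1) \<inter> dball V d j (5 powr (real_of_int (r + 1))))"
    by blast
qed

lemma card_children_le_card_cover:
  assumes node: "(j, r) \<in> Nodes d V f F J" and C: "C \<subseteq> V" "finite C"
    and cover: "dball V d j (5 powr real_of_int (r + 1)) \<subseteq>
                  (\<Union>c\<in>C. dball V d c (5 powr real_of_int (r + 1) / 16))"
  shows "card (children d V f F J par (j, r)) \<le> card C"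
proof (cases "children d V f F J par (j, r) = {}")
  case False
  let ?S = "J (r - 1) \<inter> dball V d j (5 powr real_of_int (r + 1))"
  have Ch_sub: "children d V f F J par (j, r) \<subseteq> (\<lambda>j'. (j', r - 1)) ` ?S"
    by (rule children_subset[OF node])
  from False obtain v where "v \<in> children d V f F J par (j, r)" by blast
  then have "v \<in> Nodes d V f F J" "snd v = r - 1"
    using Ch_sub unfolding children_def by auto
  then have r1_range: "rho_min F f \<le> r - 1" "r - 1 \<le> rho_max V d"
    using node unfolding Nodes_def by auto
  have "2 * (5 powr real_of_int (r + 1) / 16) < 5 powr real_of_int (r - 1 + 1)"
    by (simp add: powr_add)
  then have "card ?S \<le> card C"
    using cover maximal_sep_dist[OF J_max[rule_format, OF conjI[OF r1_range]]]
    by (intro card_le_card_cover_if_separated[OF C]) force+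
  moreover have "card (children d V f F J par (j, r)) \<le> card ?S"
    using finite_J[OF r1_range] card_mono[OF _ Ch_sub] card_image_le
    by (meson finite_Int finite_imageI order_trans)
  ultimately show ?thesis
    by linarith
qed simp

end

theorem lemma4:
  fixes V :: "'a set" and d :: "'a \<Rightarrow> 'a \<Rightarrow> real" and \<kappa> :: real
    and F :: "'a set" and f :: "'a \<Rightarrow> real"
    and J :: "int \<Rightarrow> 'a set" and par :: "'a \<times> int \<Rightarrow> 'a \<times> int"
  assumes metric: "Metric_space V d"
    and bounded: "\<exists>B. \<forall>x\<in>V. \<forall>y\<in>V. d x y \<le> B"
    and doubling: "doubling_dim_le V d \<kappa>"
    and F_fin: "finite F" and F_ne: "F \<noteq> {}" and F_sub: "F \<subseteq> V"
    and f_pos: "\<forall>j\<in>F. f j > 0"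
    and J_max: "\<forall>r. rho_min F f \<le> r \<and> r \<le> rho_max V d \<longrightarrow>
                     maximal_sep d (Jprime F f r) (5 powr (real_of_int (r + 1))) (J r)"
    and par_ok: "valid_parent d V f F J par"
    and node: "u \<in> Nodes d V f F J"
  shows "real (card (children d V f F J par u)) \<le> 2 powr (4 * \<kappa>)"
proof -
  interpret facility_tree V d F f J par
    using metric F_fin F_sub J_max par_ok
    by (simp add: facility_tree_def facility_tree_axioms_def)
  obtain j r where u: "u = (j, r)" by (cases u)
  define \<rho> where "\<rho> = 5 powr real_of_int (r + 1)"
  have "j \<in> V" "\<rho> > 0"
    using Nodes_fst_in_space node unfolding u \<rho>_def by auto
  then obtain C where C: "C \<subseteq> V" "finite C" "real (card C) \<le> (2 powr \<kappa>) ^ 4"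
    "dball V d j \<rho> \<subseteq> (\<Union>c\<in>C. dball V d c (\<rho> / 2 ^ 4))"
    using doubling_cover_iterate[OF doubling, of j \<rho> 4] by blast
  have "card (children d V f F J par u) \<le> card C"
    unfolding u using node C(4)
    by (intro card_children_le_card_cover[OF _ C(1,2)]) (simp_all add: u \<rho>_def)
  then have "real (card (children d V f F J par u)) \<le> (2 powr \<kappa>) ^ 4"
    using C(3) by linarith
  then show ?thesis
    by (simp add: powr_power)
qed

end
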